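(* The space $X_{\mathrm{crs}}$ is Hausdorff but not paracompact.
   Context: Let $X$ be the following 2-dimensional CW-complex. Its 0-cells are $e_n^0$, $n\ge 0$; the point $x=e_0^0$ is called the origin. For each $n\ge1$ there are two 1-cells $e_n^1, e_{-n}^1$, each joining $x$ to $e_n^0$, so that $e_0^0\cup e_n^0\cup e_n^1\cup e_{-n}^1$ is homeomorphic to a circle; for each $n\ge1$ a 2-cell $e_n^2$ is attached via a homeomorphism $\varphi_n:S^1\to e_0^0\cup e_n^0\cup e_n^1\cup e_{-n}^1$. Thus each closed 2-cell $\overline{e_n^2}$ is a closed disk having $x$ and $e_n^0$ on its boundary, and $X$ is a wedge at $x$ of countably many closed disks, carrying the CW (weak) topology. The coarser topology on the set $X$ consists of all subsets $U\subset X$ that are open in the CW-topology and either do not contain $x$, or contain $\overline{e_n^2}\smallsetminus e_n^0$ for all but finitely many $n\ge1$. The set $X$ with this coarser topology is denoted $X_{\mathrm{crs}}$. A space is paracompact if it is Hausdorff and every open cover has a locally finite open refinement. *)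

theory Defs
  imports "HOL-Analysis.Analysis"
begin

text \<open>Each closed 2-cell is modelled by the closed unit
disk D = cball 0 1 in the complex plane; on its boundary circle the point -1 plays
the role of the origin x = e_0^0 and the point 1 plays the role of e_n^0; the two
open arcs of the circle are the 1-cells e_n^1, e_{-n}^1. The points of X are
pairs (n, z) with n \<ge> 1, z \<in> D, z \<noteq> -1 (the point z of the n-th disk), together
with the single origin (0, -1).\<close>

definition cw_disk :: "complex set" where
  "cw_disk = cball 0 1"

definition cw_origin :: "nat \<times> complex" where
  "cw_origin = (0, -1)"

definition cw_incl :: "nat \<Rightarrow> complex \<Rightarrow> nat \<times> complex" where
  "cw_incl n z = (if z = -1 then cw_origin else (n, z))"

definition cw_carrier :: "(nat \<times> complex) set" where
  "cw_carrier = {cw_origin} \<union> {(n, z). n \<ge> 1 \<and> z \<in> cw_disk \<and> z \<noteq> -1}"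

definition cw_open :: "(nat \<times> complex) set \<Rightarrow> bool" where
  "cw_open U \<longleftrightarrow> U \<subseteq> cw_carrier \<and>
     (\<forall>n\<ge>1. openin (top_of_set cw_disk) {z \<in> cw_disk. cw_incl n z \<in> U})"

definition cw_cell_minus_vertex :: "nat \<Rightarrow> (nat \<times> complex) set" where
  "cw_cell_minus_vertex n = cw_incl n ` (cw_disk - {1})"

definition crs_open :: "(nat \<times> complex) set \<Rightarrow> bool" where
  "crs_open U \<longleftrightarrow> cw_open U \<and>
     (cw_origin \<notin> U \<or> (\<exists>F. finite F \<and> (\<forall>n. n \<ge> 1 \<and> n \<notin> F \<longrightarrow> cw_cell_minus_vertex n \<subseteq> U)))"

definition X_crs :: "(nat \<times> complex) topology" where
  "X_crs = topology crs_open"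

definition paracompact_space :: "'a topology \<Rightarrow> bool" where
  "paracompact_space X \<longleftrightarrow> Hausdorff_space X \<and>
     (\<forall>\<U>. (\<forall>U\<in>\<U>. openin X U) \<and> topspace X \<subseteq> \<Union>\<U> \<longrightarrow>
        (\<exists>\<V>. (\<forall>V\<in>\<V>. openin X V) \<and> topspace X \<subseteq> \<Union>\<V> \<and>
             (\<forall>V\<in>\<V>. \<exists>U\<in>\<U>. V \<subseteq> U) \<and> locally_finite_in X \<V>))"

lemma istopology_crs_open: "istopology crs_open"
proof -
  have e: "crs_open {}" by (simp add: crs_open_def cw_open_def)
  have i: "crs_open (S \<inter> T)" if S: "crs_open S" and T: "crs_open T" for S T
  proof -
    have cw: "cw_open (S \<inter> T)"
    proof -
      have "{z \<in> cw_disk. cw_incl n z \<in> S \<inter> T} =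
            {z \<in> cw_disk. cw_incl n z \<in> S} \<inter> {z \<in> cw_disk. cw_incl n z \<in> T}" for n by auto
      then show ?thesis using S T unfolding crs_open_def cw_open_def
        by (auto intro: openin_Int)
    qed
    show ?thesis
    proof (cases "cw_origin \<in> S \<inter> T")
      case False then show ?thesis using cw by (simp add: crs_open_def)
    next
      case True
      then obtain F G where "finite F" "\<forall>n. n \<ge> 1 \<and> n \<notin> F \<longrightarrow> cw_cell_minus_vertex n \<subseteq> S"
          "finite G" "\<forall>n. n \<ge> 1 \<and> n \<notin> G \<longrightarrow> cw_cell_minus_vertex n \<subseteq> T"
        using S T unfolding crs_open_def by blast
      then show ?thesis using cw unfolding crs_open_def
        by (intro conjI disjI2 exI[of _ "F \<union> G"]) auto
    qed
  qed
  have u: "crs_open (\<Union>K)" if K: "\<forall>S\<in>K. crs_open S" for K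
  proof -
    have cw: "cw_open (\<Union>K)"
    proof -
      have "{z \<in> cw_disk. cw_incl n z \<in> \<Union>K} = (\<Union>S\<in>K. {z \<in> cw_disk. cw_incl n z \<in> S})" for n by auto
      then show ?thesis using K unfolding crs_open_def cw_open_def
        by (auto intro!: openin_Union)
    qed
    show ?thesis
    proof (cases "cw_origin \<in> \<Union>K")
      case False then show ?thesis using cw by (simp add: crs_open_def)
    next
      case True
      then obtain S where "S \<in> K" "cw_origin \<in> S" by blast
      then obtain F where "finite F" "\<forall>n. n \<ge> 1 \<and> n \<notin> F \<longrightarrow> cw_cell_minus_vertex n \<subseteq> S"
        using K unfolding crs_open_def by blast
      then show ?thesis using cw \<open>S \<in> K\<close> unfolding crs_open_def
        by (intro conjI disjI2 exI[of _ F]) auto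
    qed
  qed
  show ?thesis unfolding istopology_def using e i u by blast
qed

lemma openin_X_crs: "openin X_crs U \<longleftrightarrow> crs_open U"
  by (simp add: X_crs_def istopology_crs_open)

end

theory Submission
  imports Defs
begin

text \<open>Points of one closed cell are separated by small balls inside that cell, and the
origin is separated from a point (n, z) by the complement of the part of cell n far from
the origin. For non-paracompactness cover X by the complement of all vertices e_n^0
together with the open cells; a refinement must contain, for every n, a member around e_n^0
lying inside cell n. Such a member meets e_n^2 - e_n^0, and every coarse neighbourhood of
the origin contains e_n^2 - e_n^0 for all but finitely many n, so the refinement cannot be
locally finite at the origin.\<close>

definition cw_cell_part :: "nat \<Rightarrow> complex set \<Rightarrow> (nat \<times> complex) set" where
  "cw_cell_part n S = Pair n ` (cw_disk \<inter> S - {-1})"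

lemma mem_cw_cell_part [simp]:
  "(m, z) \<in> cw_cell_part n S \<longleftrightarrow> m = n \<and> z \<in> cw_disk \<and> z \<in> S \<and> z \<noteq> -1"
  by (auto simp: cw_cell_part_def)

lemma cw_origin_notin_cw_cell_part [simp]: "cw_origin \<notin> cw_cell_part n S"
  by (simp add: cw_origin_def)

lemma disjnt_cw_cell_part:
  "n \<noteq> m \<or> disjnt S T \<Longrightarrow> disjnt (cw_cell_part n S) (cw_cell_part m T)"
  by (auto simp: cw_cell_part_def disjnt_def)

lemma cw_cell_part_subset_carrier: "n \<ge> 1 \<Longrightarrow> cw_cell_part n S \<subseteq> cw_carrier"
  by (auto simp: cw_cell_part_def cw_carrier_def)

lemma cw_incl_mem_cw_cell_part_iff:
  "z \<in> cw_disk \<Longrightarrow> cw_incl m z \<in> cw_cell_part n S \<longleftrightarrow> m = n \<and> z \<in> S \<and> z \<noteq> -1"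
  by (auto simp: cw_incl_def)

lemma crs_open_cw_cell_part:
  assumes "n \<ge> 1" "open S"
  shows "crs_open (cw_cell_part n S)"
proof -
  have "{z \<in> cw_disk. cw_incl m z \<in> cw_cell_part n S} =
        cw_disk \<inter> (if m = n then S - {-1} else {})" for m
    by (auto simp: cw_incl_mem_cw_cell_part_iff)
  then have "cw_open (cw_cell_part n S)"
    using assms by (auto simp: cw_open_def cw_cell_part_subset_carrier intro: openin_open_Int)
  then show ?thesis by (simp add: crs_open_def)
qed

lemma crs_open_carrier_Diff_cw_cell_parts:
  assumes closed: "\<And>n. closed (C n)" and "\<And>n. -1 \<notin> C n"
    and eventually_vertex: "finite {n. \<not> C n \<subseteq> {1}}"
  shows "crs_open (cw_carrier - (\<Union>n. cw_cell_part n (C n)))" (is "crs_open ?U")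
proof -
  have trace: "{z \<in> cw_disk. cw_incl m z \<in> ?U} = cw_disk \<inter> - C m" if "m \<ge> 1" for m
    using that assms(2) by (auto simp: cw_incl_def cw_carrier_def cw_origin_def)
  have "cw_open ?U"
    unfolding cw_open_def
  proof (intro conjI allI impI)
    fix m :: nat assume "m \<ge> 1"
    show "openin (top_of_set cw_disk) {z \<in> cw_disk. cw_incl m z \<in> ?U}"
      unfolding trace[OF \<open>m \<ge> 1\<close>] using closed by (intro openin_open_Int) auto
  qed auto
  moreover have "cw_cell_minus_vertex m \<subseteq> ?U" if m: "m \<ge> 1" "C m \<subseteq> {1}" for m
  proof
    fix p assume "p \<in> cw_cell_minus_vertex m"
    then obtain z where "p = cw_incl m z" "z \<in> cw_disk \<inter> - C m"
      using m(2) by (auto simp: cw_cell_minus_vertex_def)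
    then show "p \<in> ?U" using trace[OF m(1)] by blast
  qed
  moreover have "cw_origin \<in> ?U"
    by (simp add: cw_carrier_def)
  ultimately show ?thesis
    unfolding crs_open_def using eventually_vertex
    by (intro conjI disjI2 exI[of _ "{n. \<not> C n \<subseteq> {1}}"]) auto
qed

lemma crs_open_carrier: "crs_open cw_carrier"
  using crs_open_carrier_Diff_cw_cell_parts[of "\<lambda>_. {}"] by (simp add: cw_cell_part_def)

lemma topspace_X_crs: "topspace X_crs = cw_carrier"
proof
  show "topspace X_crs \<subseteq> cw_carrier"
    unfolding topspace_def openin_X_crs crs_open_def cw_open_def by blast
  show "cw_carrier \<subseteq> topspace X_crs"
    using crs_open_carrier openin_X_crs openin_subset by blast
qed

lemma crs_separate_origin:
  assumes "n \<ge> 1" "z \<in> cw_disk" "z \<noteq> -1"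
  shows "\<exists>U V. crs_open U \<and> crs_open V \<and> cw_origin \<in> U \<and> (n, z) \<in> V \<and> disjnt U V"
proof -
  define r where "r = dist z (-1) / 2"
  have "r > 0" using assms by (simp add: r_def)
  define C :: "nat \<Rightarrow> complex set" where "C m = (if m = n then - ball (-1) r else {})" for m
  define U where "U = cw_carrier - (\<Union>m. cw_cell_part m (C m))"
  have "closed (C m)" "-1 \<notin> C m" for m
    using \<open>r > 0\<close> by (simp_all add: C_def closed_Compl)
  moreover have "{m. \<not> C m \<subseteq> {1}} \<subseteq> {n}"
    by (auto simp: C_def)
  then have "finite {m. \<not> C m \<subseteq> {1}}"
    using finite_subset by blast
  ultimately have "crs_open U"
    unfolding U_def by (rule crs_open_carrier_Diff_cw_cell_parts)
  moreover have "crs_open (cw_cell_part n (ball z r))"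
    using assms by (simp add: crs_open_cw_cell_part)
  moreover have "disjnt U (cw_cell_part n (ball z r))"
  proof -
    have "ball z r \<subseteq> C n"
    proof
      fix w assume "w \<in> ball z r"
      then have "r \<le> dist w (-1)"
        using dist_triangle[of z "-1" w] by (simp add: r_def)
      then show "w \<in> C n" by (simp add: C_def dist_commute)
    qed
    then have "cw_cell_part n (ball z r) \<subseteq> cw_cell_part n (C n)"
      by (auto simp: cw_cell_part_def)
    then show ?thesis
      by (auto simp: disjnt_def U_def)
  qed
  moreover have "cw_origin \<in> U" "(n, z) \<in> cw_cell_part n (ball z r)"
    using assms \<open>r > 0\<close> by (auto simp: U_def cw_carrier_def)
  ultimately show ?thesis by blast
qed

lemma crs_separate_cell_points:
  assumes "z \<in> cw_disk" "z \<noteq> -1" "w \<in> cw_disk" "w \<noteq> -1" "n \<ge> 1" "m \<ge> 1"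
    and "(n, z) \<noteq> (m, w)"
  shows "\<exists>U V. crs_open U \<and> crs_open V \<and> (n, z) \<in> U \<and> (m, w) \<in> V \<and> disjnt U V"
proof (cases "z = w")
  case True
  then show ?thesis
    using assms disjnt_cw_cell_part[of n m UNIV UNIV]
    by (metis crs_open_cw_cell_part open_UNIV iso_tuple_UNIV_I mem_cw_cell_part)
next
  case False
  define r where "r = dist z w / 2"
  have "disjnt (ball z r) (ball w r)"
  proof -
    have False if "dist z x < r" "dist w x < r" for x
      using dist_triangle[of z w x] that by (simp add: r_def dist_commute)
    then show ?thesis by (auto simp: disjnt_def)
  qed
  moreover have "z \<in> ball z r" "w \<in> ball w r"
    using False by (auto simp: r_def)
  ultimately show ?thesis
    using assms disjnt_cw_cell_part[of n m "ball z r" "ball w r"]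
    by (metis crs_open_cw_cell_part open_ball mem_cw_cell_part)
qed

lemma Hausdorff_space_X_crs: "Hausdorff_space X_crs"
  unfolding Hausdorff_space_def topspace_X_crs openin_X_crs
proof (intro allI impI, elim conjE)
  fix p q assume p: "p \<in> cw_carrier" and q: "q \<in> cw_carrier" and "p \<noteq> q"
  then consider "p = cw_origin" | "q = cw_origin" | "p \<noteq> cw_origin" "q \<noteq> cw_origin"
    by blast
  then show "\<exists>U V. crs_open U \<and> crs_open V \<and> p \<in> U \<and> q \<in> V \<and> disjnt U V"
  proof cases
    case 1
    then show ?thesis
      using q \<open>p \<noteq> q\<close> crs_separate_origin by (auto simp: cw_carrier_def)
  next
    case 2
    then show ?thesis
      using p \<open>p \<noteq> q\<close> crs_separate_origin by (fastforce simp: cw_carrier_def disjnt_sym)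
  next
    case 3
    then show ?thesis
      using p q \<open>p \<noteq> q\<close> crs_separate_cell_points by (auto simp: cw_carrier_def)
  qed
qed

lemma openin_disk_vertex_nontrivial:
  assumes "openin (top_of_set cw_disk) T" "1 \<in> T"
  obtains z where "z \<in> T" "z \<noteq> 1" "z \<noteq> -1"
proof -
  obtain e where "e > 0" and e: "ball 1 e \<inter> cw_disk \<subseteq> T"
    using assms openin_contains_ball by metis
  define t where "t = 1 - min e 1 / 2"
  have t: "0 < t" "t < 1" "1 - t < e" using \<open>e > 0\<close> by (auto simp: t_def)
  have "dist 1 (complex_of_real t) = dist 1 t"
    by (metis dist_of_real of_real_1)
  then have "dist 1 (complex_of_real t) = 1 - t"
    using t by (simp add: dist_real_def)
  then have "complex_of_real t \<in> T"
    using e t by (auto simp: cw_disk_def)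
  moreover have "complex_of_real t \<noteq> 1" "complex_of_real t \<noteq> -1"
    using t by (simp_all add: complex_eq_iff)
  ultimately show ?thesis by (rule that)
qed

lemma crs_open_vertex_meets_cell_minus_vertex:
  assumes "crs_open S" "n \<ge> 1" "(n, 1) \<in> S"
  shows "S \<inter> cw_cell_minus_vertex n \<noteq> {}"
proof -
  have "openin (top_of_set cw_disk) {z \<in> cw_disk. cw_incl n z \<in> S}"
    using assms by (simp add: crs_open_def cw_open_def)
  moreover have "1 \<in> {z \<in> cw_disk. cw_incl n z \<in> S}"
    using assms by (simp add: cw_incl_def cw_disk_def)
  ultimately obtain z where "z \<in> cw_disk" "cw_incl n z \<in> S" "z \<noteq> 1"
    by (rule openin_disk_vertex_nontrivial) auto
  then show ?thesis by (auto simp: cw_cell_minus_vertex_def)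
qed

lemma crs_open_carrier_Diff_vertices: "crs_open (cw_carrier - (\<Union>n. cw_cell_part n {1}))"
  by (rule crs_open_carrier_Diff_cw_cell_parts) auto

lemma not_paracompact_space_X_crs: "\<not> paracompact_space X_crs"
proof
  assume "paracompact_space X_crs"
  define \<U> where "\<U> = insert (cw_carrier - (\<Union>n. cw_cell_part n {1}))
                           ((\<lambda>n. cw_cell_part n UNIV) ` {1..})"
  have vertex: "(n, 1) \<in> cw_cell_part n UNIV" if "n \<ge> 1" for n
    by (simp add: cw_disk_def)
  have \<U>_open: "\<forall>U\<in>\<U>. openin X_crs U"
    unfolding \<U>_def openin_X_crs
    using crs_open_carrier_Diff_vertices crs_open_cw_cell_part by blast
  have \<U>_cover: "topspace X_crs \<subseteq> \<Union>\<U>"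
  proof
    fix p assume "p \<in> topspace X_crs"
    then have "p \<in> cw_carrier" by (simp add: topspace_X_crs)
    then show "p \<in> \<Union>\<U>"
      by (cases p) (auto simp: \<U>_def cw_carrier_def cw_origin_def)
  qed
  obtain \<V> where \<V>: "\<forall>V\<in>\<V>. openin X_crs V" "topspace X_crs \<subseteq> \<Union>\<V>"
    "\<forall>V\<in>\<V>. \<exists>U\<in>\<U>. V \<subseteq> U" "locally_finite_in X_crs \<V>"
    using \<open>paracompact_space X_crs\<close> \<U>_open \<U>_cover
    unfolding paracompact_space_def by (elim conjE allE[of _ \<U>] impE exE) auto
  have "cw_origin \<in> topspace X_crs"
    by (simp add: topspace_X_crs cw_carrier_def)
  then obtain N where N: "crs_open N" "cw_origin \<in> N" "finite {V \<in> \<V>. V \<inter> N \<noteq> {}}"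
    using \<V>(4) unfolding locally_finite_in_def openin_X_crs by blast
  then obtain F where "finite F"
    and F: "\<And>n. n \<ge> 1 \<Longrightarrow> n \<notin> F \<Longrightarrow> cw_cell_minus_vertex n \<subseteq> N"
    unfolding crs_open_def by blast
  have "\<exists>V\<in>\<V>. (n, 1) \<in> V" if "n \<ge> 1" for n
    using \<V>(2) vertex[OF that] cw_cell_part_subset_carrier[OF that]
    unfolding topspace_X_crs by blast
  then obtain V where V: "\<And>n. n \<ge> 1 \<Longrightarrow> V n \<in> \<V>" "\<And>n. n \<ge> 1 \<Longrightarrow> (n, 1) \<in> V n"
    by metis
  have V_cell: "V n \<subseteq> cw_cell_part n UNIV" if n: "n \<ge> 1" for n
  proof -
    obtain U where "U \<in> \<U>" "V n \<subseteq> U" using \<V>(3) V(1)[OF n] by blast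
    moreover have "(n, 1) \<in> U" using \<open>V n \<subseteq> U\<close> V(2)[OF n] by blast
    moreover have "(n, 1) \<notin> cw_carrier - (\<Union>m. cw_cell_part m {1})"
      by (simp add: cw_disk_def)
    ultimately obtain m where "U = cw_cell_part m UNIV" "(n, 1) \<in> U"
      unfolding \<U>_def by auto
    then show ?thesis using \<open>V n \<subseteq> U\<close> by simp
  qed
  have "inj_on V {1..}"
  proof (rule inj_onI)
    fix m n :: nat assume "m \<in> {1..}" "n \<in> {1..}" "V m = V n"
    then have "(n, 1) \<in> cw_cell_part m UNIV" using V(2) V_cell by fastforce
    then show "m = n" by simp
  qed
  moreover have "V ` ({1..} - F) \<subseteq> {W \<in> \<V>. W \<inter> N \<noteq> {}}"
  proof (rule image_subsetI)
    fix n :: nat assume "n \<in> {1..} - F"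
    then have "V n \<inter> cw_cell_minus_vertex n \<noteq> {}"
      using V \<V>(1) crs_open_vertex_meets_cell_minus_vertex by (simp add: openin_X_crs)
    then show "V n \<in> {W \<in> \<V>. W \<inter> N \<noteq> {}}"
      using V(1) F \<open>n \<in> {1..} - F\<close> by auto
  qed
  ultimately have "finite ({1..} - F)"
    using N(3) by (meson finite_subset finite_imageD inj_on_diff)
  then show False
    using Diff_infinite_finite[OF \<open>finite F\<close> infinite_Ici] by blast
qed

theorem proposition1p1:
  shows "Hausdorff_space X_crs \<and> \<not> paracompact_space X_crs"
  using Hausdorff_space_X_crs not_paracompact_space_X_crs by blast

end
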